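(* Let $T\in(0,\infty]$ and let $u(x,t)=(u_1,u_2)$, $x=(x_1,x_2)\in\mathbb{R}^2$, $t\in[0,T)$, be a smooth divergence-free velocity field, $u=\nabla^{\perp}\psi=\left(-\frac{\partial\psi}{\partial x_2},\frac{\partial\psi}{\partial x_1}\right)$ for a smooth stream function $\psi$. Suppose $[a,b]$ ($a<b$) and $f_\pm\in C^1([a,b]\times[0,T))$ satisfy: (i) $f_-(x_1,t)<f_+(x_1,t)$ for all $x_1\in[a,b]$, $t\in[0,T)$; (ii) $u_2(x_1,x_2,t)=\frac{\partial f_\pm}{\partial x_1}(x_1,t)\,u_1(x_1,x_2,t)+\frac{\partial f_\pm}{\partial t}(x_1,t)$ at $x_2=f_\pm(x_1,t)$ for all $x_1\in[a,b]$, $t\in[0,T)$ (the arcs $x_2=f_\pm(x_1,t)$ move with the fluid); and (iii) the velocity growth is controlled: $$\int_0^T\sup\{|u(x_1,x_2,t)|: x_1\in[a,b],\ f_-(x_1,t)\le x_2\le f_+(x_1,t)\}\,dt<\infty.$$ Then it is not the case that both $f_+(x_1,t)-f_-(x_1,t)$ is bounded on $[a,b]\times[0,T)$ and $\lim_{t\to T^-}(f_+(x_1,t)-f_-(x_1,t))=0$ for every $x_1\in[a,b]$; that is, a sharp front cannot develop at time $T$.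
   Context: A sharp front at time $T$ means the existence of $[a,b]$, $f_\pm$ as in (i)–(ii) such that moreover $f_+-f_-$ is bounded on $[a,b]\times[0,T)$ and $\lim_{t\to T^-}(f_+(x_1,t)-f_-(x_1,t))=0$ for all $x_1\in[a,b]$. The spatial domain may be $\mathbb{R}^2$ or the torus $\mathbb{R}^2/\mathbb{Z}^2$. *)

theory Defs
  imports "HOL-Analysis.Analysis"
begin

fun Ck_on :: "nat \<Rightarrow> 'a::euclidean_space set \<Rightarrow> ('a \<Rightarrow> real) \<Rightarrow> bool" where
  "Ck_on 0 U g = continuous_on U g"
| "Ck_on (Suc k) U g =
     ((\<forall>x\<in>U. g differentiable (at x)) \<and>
      (\<forall>i\<in>Basis. Ck_on k U (\<lambda>x. frechet_derivative g (at x) i)))"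

definition smooth_on :: "'a::euclidean_space set \<Rightarrow> ('a \<Rightarrow> real) \<Rightarrow> bool" where
  "smooth_on S g \<longleftrightarrow> (\<exists>U. open U \<and> S \<subseteq> U \<and> (\<forall>k. Ck_on k U g))"

definition time_int :: "ereal \<Rightarrow> real set" where
  "time_int T = {t. 0 \<le> t \<and> ereal t < T}"

definition before :: "ereal \<Rightarrow> real filter" where
  "before T = (if T = \<infinity> then at_top else at_left (real_of_ereal T))"

definition vel1 :: "(real \<times> real \<times> real \<Rightarrow> real) \<Rightarrow> real \<Rightarrow> real \<Rightarrow> real \<Rightarrow> real" where
  "vel1 \<psi> x1 x2 t = - deriv (\<lambda>y. \<psi> (x1, y, t)) x2"

definition vel2 :: "(real \<times> real \<times> real \<Rightarrow> real) \<Rightarrow> real \<Rightarrow> real \<Rightarrow> real \<Rightarrow> real" where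
  "vel2 \<psi> x1 x2 t = deriv (\<lambda>y. \<psi> (y, x2, t)) x1"

end

theory Submission
  imports Defs
begin

(*
  Write delta = f_+ - f_- for the width of the strip and
  Phi(x,t) = psi(x, f_+(x,t), t) - psi(x, f_-(x,t), t) for the flux of the velocity through the
  vertical segment above x. Because both arcs move with the fluid, d/dt delta = d/dx Phi, and by the
  mean value theorem in x2, |Phi| <= U delta, where U(t) is the largest speed in the strip, which is
  integrable in time. Let A(p,q,t) be the integral of delta(-,t) over [p,q]. Integrating the
  conservation law over [alpha,beta] x [t,t1], with alpha in [p,p+eps] and beta in [q-eps,q] chosen
  where the U-weighted width is below its average, gives
    eps * A(p+eps, q-eps, t) <= eps * A(a,b,t1) + integral_t^t1 U(s) A(p,q,s) ds.
  Iterating this k times with eps = (b-a)/(4k), the Volterra structure yields the factor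
  (integral_t^t1 U / eps)^k / k!, which is at most 2^-k once integral_t^T U <= (b-a)/24. For a
  collapsing strip A(a,b,t1) -> 0 by dominated convergence, so the positive number
  A(a + (b-a)/4, b - (b-a)/4, t) would have to be arbitrarily small.
*)

lemma continuous_on_slice_left:
  assumes "continuous_on (A \<times> B) (\<lambda>(x, y). f x y)" "y \<in> B" "X \<subseteq> A"
  shows "continuous_on X (\<lambda>x. f x y)"
proof -
  have "continuous_on X (\<lambda>x. (\<lambda>(x, y). f x y) (x, y))"
    by (rule continuous_on_compose2[OF assms(1)]) (use assms in \<open>auto intro!: continuous_intros\<close>)
  then show ?thesis by simp
qed

lemma continuous_on_slice_right:
  assumes "continuous_on (A \<times> B) (\<lambda>(x, y). f x y)" "x \<in> A" "Y \<subseteq> B"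
  shows "continuous_on Y (f x)"
proof -
  have "continuous_on Y (\<lambda>y. (\<lambda>(x, y). f x y) (x, y))"
    by (rule continuous_on_compose2[OF assms(1)]) (use assms in \<open>auto intro!: continuous_intros\<close>)
  then show ?thesis by simp
qed

lemma continuous_on_SUP_compact:
  fixes h :: "'a::metric_space \<Rightarrow> 'b::metric_space \<Rightarrow> real"
  assumes K: "compact K" "K \<noteq> {}" and C: "compact C"
    and h: "continuous_on (K \<times> C) (\<lambda>(q, s). h q s)"
  shows "continuous_on C (\<lambda>s. SUP q\<in>K. h q s)"
  unfolding continuous_on_iff
proof (intro ballI allI impI)
  fix s0 e assume s0: "s0 \<in> C" and e: "(0::real) < e"
  have "uniformly_continuous_on (K \<times> C) (\<lambda>(q, s). h q s)"
    using K C h by (intro compact_uniformly_continuous compact_Times)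
  then obtain d where d: "0 < d" and close: "\<And>z z'. z \<in> K \<times> C \<Longrightarrow> z' \<in> K \<times> C \<Longrightarrow>
      dist z' z < d \<Longrightarrow> dist ((\<lambda>(q, s). h q s) z') ((\<lambda>(q, s). h q s) z) < e / 2"
    unfolding uniformly_continuous_on_def by (meson e half_gt_zero)
  have bdd: "bdd_above ((\<lambda>q. h q s) ` K)" if "s \<in> C" for s
    using that by (intro bounded_imp_bdd_above compact_imp_bounded compact_continuous_image
        continuous_on_slice_left[OF h] K(1)) auto
  show "\<exists>d>0. \<forall>s\<in>C. dist s s0 < d \<longrightarrow> dist (SUP q\<in>K. h q s) (SUP q\<in>K. h q s0) < e"
  proof (intro exI[of _ d] conjI ballI impI d)
    fix s assume s: "s \<in> C" "dist s s0 < d"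
    have near: "\<bar>h q s - h q s0\<bar> \<le> e / 2" if "q \<in> K" for q
      using close[of "(q, s0)" "(q, s)"] that s s0 by (simp add: dist_Pair_Pair dist_real_def)
    have "(SUP q\<in>K. h q s) \<le> (SUP q\<in>K. h q s0) + e / 2"
    proof (rule cSUP_least[OF K(2)])
      fix q assume q: "q \<in> K"
      show "h q s \<le> (SUP q\<in>K. h q s0) + e / 2"
        using near[OF q] cSUP_upper[OF q bdd[OF s0]] by linarith
    qed
    moreover have "(SUP q\<in>K. h q s0) \<le> (SUP q\<in>K. h q s) + e / 2"
    proof (rule cSUP_least[OF K(2)])
      fix q assume q: "q \<in> K"
      show "h q s0 \<le> (SUP q\<in>K. h q s) + e / 2"
        using near[OF q] cSUP_upper[OF q bdd[OF s(1)]] by linarith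
    qed
    ultimately show "dist (SUP q\<in>K. h q s) (SUP q\<in>K. h q s0) < e"
      using e by (simp add: dist_real_def abs_le_iff)
  qed
qed

lemma exists_point_below_average:
  fixes g :: "real \<Rightarrow> real"
  assumes "continuous_on {p..q} g" "p \<le> q"
  obtains x where "x \<in> {p..q}" "(q - p) * g x \<le> integral {p..q} g"
proof -
  obtain x where x: "x \<in> {p..q}" "\<And>y. y \<in> {p..q} \<Longrightarrow> g x \<le> g y"
    using continuous_attains_inf[OF compact_Icc _ assms(1)] assms(2) by auto
  have "integral {p..q} (\<lambda>_. g x) \<le> integral {p..q} g"
    using x assms by (intro integral_le integrable_continuous_interval) auto
  with x(1) assms(2) that show ?thesis by auto
qed

lemma integral_mult_power_tail_integral:
  fixes U :: "real \<Rightarrow> real"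
  assumes U: "continuous_on {t..t1} U" and "t \<le> t1"
  shows "integral {t..t1} (\<lambda>s. U s * integral {s..t1} U ^ m) = integral {t..t1} U ^ Suc m / Suc m"
proof -
  define P where "P = (\<lambda>s. - (integral {s..t1} U ^ Suc m / Suc m))"
  have "(P has_real_derivative U s * integral {s..t1} U ^ m) (at s within {t..t1})"
    if "s \<in> {t..t1}" for s
  proof -
    have "((\<lambda>s. integral {s..t1} U ^ Suc m) has_real_derivative
        real (Suc m) * integral {s..t1} U ^ m * - U s) (at s within {t..t1})"
      using DERIV_power[OF integral_has_real_derivative'[OF U that], of "Suc m"] by (simp add: mult_ac)
    from DERIV_minus[OF DERIV_cdivide[OF this, of "real (Suc m)"]] show ?thesis
      unfolding P_def by (rule DERIV_cong) (simp del: of_nat_Suc)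
  qed
  then have "((\<lambda>s. U s * integral {s..t1} U ^ m) has_integral P t1 - P t) {t..t1}"
    using \<open>t \<le> t1\<close> by (intro fundamental_theorem_of_calculus)
      (simp_all add: has_real_derivative_iff_has_vector_derivative)
  then show ?thesis by (simp add: P_def integral_unique)
qed

lemma power_div_fact_le_exp:
  fixes x :: real
  assumes "0 \<le> x"
  shows "x ^ k / fact k \<le> exp x"
proof -
  have "(\<lambda>n. x ^ n /\<^sub>R fact n) sums exp x" by (rule exp_converges)
  then have "(\<Sum>n\<in>{k}. x ^ n /\<^sub>R fact n) \<le> (\<Sum>n. x ^ n /\<^sub>R fact n)"
    using assms by (intro sum_le_suminf) (auto simp: sums_iff)
  then show ?thesis
    using sums_unique[OF exp_converges[of x]] by (simp add: divide_inverse_commute)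
qed

lemma integral_conservation_rectangle:
  fixes \<delta> \<Phi> g :: "real \<Rightarrow> real \<Rightarrow> real"
  assumes "\<alpha> \<le> \<beta>" "t \<le> t1"
    and g: "continuous_on ({\<alpha>..\<beta>} \<times> {t..t1}) (\<lambda>(x, s). g x s)"
    and \<delta>: "\<And>x s. x \<in> {\<alpha>..\<beta>} \<Longrightarrow> s \<in> {t..t1} \<Longrightarrow>
             ((\<lambda>s. \<delta> x s) has_real_derivative g x s) (at s within {t..t1})"
    and \<Phi>: "\<And>x s. x \<in> {\<alpha>..\<beta>} \<Longrightarrow> s \<in> {t..t1} \<Longrightarrow>
             ((\<lambda>x. \<Phi> x s) has_real_derivative g x s) (at x within {\<alpha>..\<beta>})"
  shows "integral {\<alpha>..\<beta>} (\<lambda>x. \<delta> x t1 - \<delta> x t) = integral {t..t1} (\<lambda>s. \<Phi> \<beta> s - \<Phi> \<alpha> s)"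
proof -
  have "integral {\<alpha>..\<beta>} (\<lambda>x. \<delta> x t1 - \<delta> x t) = integral {\<alpha>..\<beta>} (\<lambda>x. integral {t..t1} (g x))"
    using \<delta> \<open>t \<le> t1\<close> by (intro integral_cong integral_unique[symmetric] fundamental_theorem_of_calculus)
      (auto simp: has_real_derivative_iff_has_vector_derivative)
  also have "\<dots> = integral {t..t1} (\<lambda>s. integral {\<alpha>..\<beta>} (\<lambda>x. g x s))"
    using integral_swap_continuous[of \<alpha> t \<beta> t1 g] g by (simp add: cbox_Pair_eq)
  also have "\<dots> = integral {t..t1} (\<lambda>s. \<Phi> \<beta> s - \<Phi> \<alpha> s)"
    using \<Phi> \<open>\<alpha> \<le> \<beta>\<close> by (intro integral_cong integral_unique fundamental_theorem_of_calculus)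
      (auto simp: has_real_derivative_iff_has_vector_derivative)
  finally show ?thesis .
qed

lemma power_div_fact_le_half_power:
  fixes x :: real
  assumes "0 \<le> x" "x \<le> real k / 6"
  shows "x ^ k / fact k \<le> (1 / 2) ^ k"
proof -
  have "x ^ k / fact k \<le> (real k / 6) ^ k / fact k"
    using assms by (intro divide_right_mono power_mono) auto
  also have "\<dots> = real k ^ k / fact k * (1 / 6) ^ k"
    by (simp add: power_divide)
  also have "\<dots> \<le> exp 1 ^ k * (1 / 6) ^ k"
  proof (rule mult_right_mono)
    have "exp (real k) = exp 1 ^ k"
      by (metis exp_of_nat_mult mult.right_neutral)
    then show "real k ^ k / fact k \<le> exp 1 ^ k"
      using power_div_fact_le_exp[of "real k" k] by linarith
  qed simp
  also have "\<dots> \<le> 3 ^ k * (1 / 6) ^ k"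
    by (intro mult_right_mono power_mono exp_le) auto
  also have "\<dots> = (1 / 2) ^ k"
    by (simp add: power_mult_distrib[symmetric])
  finally show ?thesis .
qed

lemma integral_mult_affine_power_tail_integral:
  fixes U :: "real \<Rightarrow> real"
  assumes U: "continuous_on {t..t1} U" and "t \<le> t1" and "\<epsilon> \<noteq> 0"
  shows "integral {t..t1} (\<lambda>s. U s * (C + A * (integral {s..t1} U / \<epsilon>) ^ m / fact m))
    = C * integral {t..t1} U + \<epsilon> * (A * (integral {t..t1} U / \<epsilon>) ^ Suc m / fact (Suc m))"
proof -
  have V: "continuous_on {t..t1} (\<lambda>s. integral {s..t1} U)"
    by (intro indefinite_integral_continuous_1' integrable_continuous_interval U)
  have "integral {t..t1} (\<lambda>s. U s * (C + A * (integral {s..t1} U / \<epsilon>) ^ m / fact m))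
      = integral {t..t1} (\<lambda>s. C * U s + A / (\<epsilon> ^ m * fact m) * (U s * integral {s..t1} U ^ m))"
    by (intro integral_cong) (use \<open>\<epsilon> \<noteq> 0\<close> in \<open>simp add: field_simps power_divide\<close>)
  also have "\<dots> = C * integral {t..t1} U
      + A / (\<epsilon> ^ m * fact m) * integral {t..t1} (\<lambda>s. U s * integral {s..t1} U ^ m)"
    by (subst integral_add)
      (use \<open>\<epsilon> \<noteq> 0\<close> in \<open>auto intro!: integrable_continuous_interval continuous_intros U V\<close>)
  also have "\<dots> = C * integral {t..t1} U + \<epsilon> * (A * (integral {t..t1} U / \<epsilon>) ^ Suc m / fact (Suc m))"
    using \<open>\<epsilon> \<noteq> 0\<close> by (simp add: integral_mult_power_tail_integral[OF U \<open>t \<le> t1\<close>] field_simps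
        power_divide del: of_nat_Suc)
  finally show ?thesis .
qed

lemma iterated_integral_inequality:
  fixes F :: "nat \<Rightarrow> real \<Rightarrow> real" and U :: "real \<Rightarrow> real"
  assumes U_cont: "continuous_on {t0..t1} U" and U_nonneg: "\<And>s. s \<in> {t0..t1} \<Longrightarrow> 0 \<le> U s"
    and F_cont: "\<And>m. m < k \<Longrightarrow> continuous_on {t0..t1} (F m)"
    and F_0: "\<And>t. t \<in> {t0..t1} \<Longrightarrow> F 0 t \<le> A"
    and F_Suc: "\<And>m t. m < k \<Longrightarrow> t \<in> {t0..t1} \<Longrightarrow>
                  \<epsilon> * F (Suc m) t \<le> \<epsilon> * E + integral {t..t1} (\<lambda>s. U s * F m s)"
    and \<epsilon>: "0 < \<epsilon>" and E: "0 \<le> E" and \<eta>: "integral {t0..t1} U \<le> \<eta>"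
  shows "m \<le> k \<Longrightarrow> t \<in> {t0..t1} \<Longrightarrow>
    F m t \<le> E * (\<Sum>j<m. (\<eta> / \<epsilon>) ^ j) + A * (integral {t..t1} U / \<epsilon>) ^ m / fact m"
proof (induction m arbitrary: t)
  case 0
  then show ?case using F_0 by simp
next
  case (Suc m)
  define r where "r = \<eta> / \<epsilon>"
  define \<Sigma> where "\<Sigma> = (\<Sum>j<m. r ^ j)"
  define V where "V s = integral {s..t1} U" for s
  define X where "X = A * (V t / \<epsilon>) ^ Suc m / fact (Suc m)"
  have t: "t \<le> t1" and sub: "{t..t1} \<subseteq> {t0..t1}" using Suc.prems by auto
  have U_cont': "continuous_on {t..t1} U" using continuous_on_subset[OF U_cont sub] .
  have "0 \<le> V t" "V t \<le> integral {t0..t1} U"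
    unfolding V_def using sub U_nonneg
    by (auto intro!: integral_nonneg integral_subset_le integrable_continuous_interval
        continuous_on_subset[OF U_cont])
  with \<eta> have V: "0 \<le> V t" "V t \<le> \<eta>" by simp_all
  have \<Sigma>_nonneg: "0 \<le> \<Sigma>"
    unfolding \<Sigma>_def r_def using V \<epsilon> by (intro sum_nonneg) auto
  have "integral {t..t1} (\<lambda>s. U s * F m s)
      \<le> integral {t..t1} (\<lambda>s. U s * (E * \<Sigma> + A * (V s / \<epsilon>) ^ m / fact m))"
  proof (rule integral_le)
    show "(\<lambda>s. U s * F m s) integrable_on {t..t1}"
      using Suc.prems by (intro integrable_continuous_interval continuous_intros U_cont'
          continuous_on_subset[OF F_cont sub]) auto
    show "(\<lambda>s. U s * (E * \<Sigma> + A * (V s / \<epsilon>) ^ m / fact m)) integrable_on {t..t1}"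
      unfolding V_def using \<epsilon> by (auto intro!: integrable_continuous_interval continuous_intros U_cont'
          indefinite_integral_continuous_1')
    show "U s * F m s \<le> U s * (E * \<Sigma> + A * (V s / \<epsilon>) ^ m / fact m)" if "s \<in> {t..t1}" for s
      using Suc.IH[of s] Suc.prems that sub U_nonneg unfolding \<Sigma>_def r_def V_def
      by (intro mult_left_mono) auto
  qed
  also have "\<dots> = E * \<Sigma> * V t + \<epsilon> * X"
    unfolding V_def X_def
    using integral_mult_affine_power_tail_integral[OF U_cont' t, of \<epsilon> "E * \<Sigma>" A m] \<epsilon> by simp
  finally have "\<epsilon> * F (Suc m) t \<le> \<epsilon> * (E + E * \<Sigma> * (V t / \<epsilon>) + X)"
    using F_Suc[of m t] Suc.prems \<epsilon> by (simp add: algebra_simps)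
  then have "F (Suc m) t \<le> E + E * \<Sigma> * (V t / \<epsilon>) + X"
    using \<epsilon> by simp
  also have "E * \<Sigma> * (V t / \<epsilon>) \<le> E * \<Sigma> * r"
    unfolding r_def using V E \<Sigma>_nonneg \<epsilon> by (intro mult_left_mono divide_right_mono) auto
  moreover have "(\<Sum>j<Suc m. r ^ j) = 1 + r * \<Sigma>"
    unfolding \<Sigma>_def by (simp add: sum.lessThan_Suc_shift sum_distrib_left del: sum.lessThan_Suc)
  ultimately show ?case unfolding r_def V_def X_def by (simp add: algebra_simps)
qed

lemma time_int_nonneg: "t \<in> time_int T \<Longrightarrow> 0 \<le> t"
  by (simp add: time_int_def)

lemma atLeastAtMost_subset_time_int: "0 \<le> u \<Longrightarrow> t \<in> time_int T \<Longrightarrow> {u..t} \<subseteq> time_int T"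
  by (auto simp: time_int_def intro: le_less_trans[of _ "ereal t"])

lemma time_int_segment_subset: "t \<in> time_int T \<Longrightarrow> t1 \<in> time_int T \<Longrightarrow> {t..t1} \<subseteq> time_int T"
  by (intro atLeastAtMost_subset_time_int time_int_nonneg)

lemma zero_in_time_int: "0 < T \<Longrightarrow> 0 \<in> time_int T"
  by (simp add: time_int_def zero_ereal_def)

lemma time_int_exists_gt:
  assumes "t \<in> time_int T"
  shows "\<exists>t'\<in>time_int T. t < t'"
proof (cases T)
  case (real r)
  with assms show ?thesis by (intro bexI[of _ "(t + r) / 2"]) (auto simp: time_int_def)
next
  case PInf
  with assms show ?thesis by (intro bexI[of _ "t + 1"]) (auto simp: time_int_def)
next
  case MInf
  with assms show ?thesis by (simp add: time_int_def)
qed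

lemma continuous_on_time_int:
  assumes "\<And>t. t \<in> time_int T \<Longrightarrow> continuous_on {0..t} f"
  shows "continuous_on (time_int T) f"
  unfolding continuous_on_def
proof
  fix s assume s: "s \<in> time_int T"
  obtain t where t: "t \<in> time_int T" "s < t" using time_int_exists_gt[OF s] by blast
  have "at s within time_int T = at s within {0..t}"
    using s t atLeastAtMost_subset_time_int[OF _ t(1)]
    by (intro at_within_nhd[of _ "{..<t}"]) (auto dest: time_int_nonneg)
  moreover have "(f \<longlongrightarrow> f s) (at s within {0..t})"
    using assms[OF t(1)] s t time_int_nonneg[OF s] unfolding continuous_on_def by auto
  ultimately show "(f \<longlongrightarrow> f s) (at s within time_int T)" by simp
qed

lemma before_sequence:
  assumes "t0 \<in> time_int T"
  obtains \<sigma> :: "nat \<Rightarrow> real"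
  where "\<And>n. \<sigma> n \<in> time_int T" "\<And>n. t0 \<le> \<sigma> n" "filterlim \<sigma> (before T) sequentially"
proof (cases T)
  case (real r)
  with assms have t0: "0 \<le> t0" "t0 < r" by (auto simp: time_int_def)
  define \<sigma> where "\<sigma> n = r - (r - t0) / real (Suc n)" for n
  have \<sigma>: "t0 \<le> \<sigma> n" "\<sigma> n < r" for n
  proof -
    have "(r - t0) / real (Suc n) \<le> r - t0" using t0 by (simp add: divide_le_eq)
    then show "t0 \<le> \<sigma> n" "\<sigma> n < r" using t0 by (simp_all add: \<sigma>_def)
  qed
  have "\<sigma> \<longlonglongrightarrow> r - 0"
    unfolding \<sigma>_def[abs_def] by (intro tendsto_diff tendsto_const LIMSEQ_Suc lim_const_over_n)
  then have "filterlim \<sigma> (at_left r) sequentially"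
    by (intro tendsto_imp_filterlim_at_left) (auto simp: \<sigma>)
  moreover have "\<sigma> n \<in> time_int T" for n
    using \<sigma>[of n] t0 real by (simp add: time_int_def)
  ultimately show ?thesis using \<sigma>(1) real by (intro that[of \<sigma>]) (simp_all add: before_def)
next
  case PInf
  define \<sigma> where "\<sigma> n = t0 + real n" for n
  have "filterlim \<sigma> at_top sequentially"
    unfolding \<sigma>_def[abs_def] by (rule filterlim_tendsto_add_at_top[OF tendsto_const filterlim_real_sequentially])
  then show ?thesis
    using assms PInf by (intro that[of \<sigma>]) (auto simp: \<sigma>_def time_int_def before_def)
next
  case MInf
  with assms show ?thesis by (simp add: time_int_def)
qed

lemma integral_tail_small:
  fixes U :: "real \<Rightarrow> real"
  assumes T: "0 < T" and U_cont: "continuous_on (time_int T) U"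
    and U_nonneg: "\<And>t. t \<in> time_int T \<Longrightarrow> 0 \<le> U t"
    and U_finite: "(\<integral>\<^sup>+ t \<in> time_int T. ennreal (U t) \<partial>lborel) < \<infinity>" and "0 < \<eta>"
  shows "\<exists>t0\<in>time_int T. \<forall>t1\<in>time_int T. t0 \<le> t1 \<longrightarrow> integral {t0..t1} U \<le> \<eta>"
proof -
  have U_integrable: "U integrable_on {u..t}" if "0 \<le> u" "t \<in> time_int T" for u t
    using that by (intro integrable_continuous_interval continuous_on_subset[OF U_cont]
        atLeastAtMost_subset_time_int)
  obtain G where G: "(\<integral>\<^sup>+ t \<in> time_int T. ennreal (U t) \<partial>lborel) = ennreal G" "0 \<le> G"
    using U_finite by (cases rule: ennreal_cases) auto
  define F where "F t = integral {0..t} U" for t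
  have F_le: "F t \<le> G" if t: "t \<in> time_int T" for t
  proof -
    have sub: "{0..t} \<subseteq> time_int T" using atLeastAtMost_subset_time_int[OF order_refl t] .
    have "ennreal (F t) = (\<integral>\<^sup>+ s. ennreal (U s) * indicator {0..t} s \<partial>lborel)"
      unfolding F_def using U_integrable[OF order_refl t] U_nonneg subsetD[OF sub]
      by (intro nn_integral_has_integral_lebesgue'[symmetric] integrable_integral) blast+
    also have "\<dots> \<le> (\<integral>\<^sup>+ s \<in> time_int T. ennreal (U s) \<partial>lborel)"
      using subsetD[OF sub] by (intro nn_integral_mono mult_left_mono indicator_leI) simp_all
    finally have "ennreal (F t) \<le> ennreal G" unfolding G(1) .
    then show ?thesis using ennreal_le_iff[OF G(2)] by blast
  qed
  have F_add: "F t + integral {t..t1} U = F t1" if "t \<in> time_int T" "t1 \<in> time_int T" "t \<le> t1" for t t1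
    unfolding F_def using time_int_nonneg[OF that(1)] that(3) U_integrable[OF order_refl that(2)]
    by (rule Henstock_Kurzweil_Integration.integral_combine)
  define L where "L = (SUP t\<in>time_int T. F t)"
  have bdd: "bdd_above (F ` time_int T)" using F_le by (intro bdd_aboveI[of _ G]) auto
  have ne: "time_int T \<noteq> {}" using zero_in_time_int[OF T] by blast
  have "L - \<eta> < (SUP t\<in>time_int T. F t)" using assms unfolding L_def by simp
  then obtain t0 where t0: "t0 \<in> time_int T" "L - \<eta> < F t0"
    unfolding less_cSUP_iff[OF ne bdd] by blast
  have "integral {t0..t1} U \<le> \<eta>" if "t1 \<in> time_int T" "t0 \<le> t1" for t1
    using F_add[OF t0(1) that] t0(2) cSUP_upper[OF that(1) bdd] unfolding L_def by linarith
  with t0 show ?thesis by blast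
qed

(* balance is the weak form of the conservation law d/dt delta = d/dx Phi. *)
locale flux_controlled_layer =
  fixes T :: ereal and a b :: real and \<delta> \<Phi> :: "real \<Rightarrow> real \<Rightarrow> real" and U :: "real \<Rightarrow> real"
  assumes T_pos: "0 < T" and ab: "a < b"
    and delta_cont: "continuous_on ({a..b} \<times> time_int T) (\<lambda>(x, t). \<delta> x t)"
    and delta_pos: "\<And>x t. x \<in> {a..b} \<Longrightarrow> t \<in> time_int T \<Longrightarrow> 0 < \<delta> x t"
    and flux_cont: "\<And>x. x \<in> {a..b} \<Longrightarrow> continuous_on (time_int T) (\<Phi> x)"
    and flux_bound: "\<And>x t. x \<in> {a..b} \<Longrightarrow> t \<in> time_int T \<Longrightarrow> \<bar>\<Phi> x t\<bar> \<le> U t * \<delta> x t"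
    and balance: "\<And>\<alpha> \<beta> t t1. a \<le> \<alpha> \<Longrightarrow> \<alpha> \<le> \<beta> \<Longrightarrow> \<beta> \<le> b \<Longrightarrow>
        t \<in> time_int T \<Longrightarrow> t1 \<in> time_int T \<Longrightarrow> t \<le> t1 \<Longrightarrow>
        integral {\<alpha>..\<beta>} (\<lambda>x. \<delta> x t1 - \<delta> x t) = integral {t..t1} (\<lambda>s. \<Phi> \<beta> s - \<Phi> \<alpha> s)"
    and U_cont: "continuous_on (time_int T) U"
    and U_nn_integral: "(\<integral>\<^sup>+ t \<in> time_int T. ennreal (U t) \<partial>lborel) < \<infinity>"
begin

lemma U_nonneg:
  assumes "t \<in> time_int T"
  shows "0 \<le> U t"
proof -
  have a: "a \<in> {a..b}" using ab by simp
  have "0 \<le> U t * \<delta> a t" using flux_bound[OF a assms] abs_ge_zero order_trans by blast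
  then show ?thesis using delta_pos[OF a assms] by (simp add: zero_le_mult_iff)
qed

lemma U_integrable: "0 \<le> u \<Longrightarrow> t \<in> time_int T \<Longrightarrow> U integrable_on {u..t}"
  by (intro integrable_continuous_interval continuous_on_subset[OF U_cont] atLeastAtMost_subset_time_int)

lemma U_tail_small:
  "0 < \<eta> \<Longrightarrow> \<exists>t0\<in>time_int T. \<forall>t1\<in>time_int T. t0 \<le> t1 \<longrightarrow> integral {t0..t1} U \<le> \<eta>"
  by (rule integral_tail_small[OF T_pos U_cont U_nonneg U_nn_integral])

lemma delta_integrable: "a \<le> p \<Longrightarrow> q \<le> b \<Longrightarrow> t \<in> time_int T \<Longrightarrow> (\<lambda>x. \<delta> x t) integrable_on {p..q}"
  by (intro integrable_continuous_interval continuous_on_slice_left[OF delta_cont]) auto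

definition area :: "real \<Rightarrow> real \<Rightarrow> real \<Rightarrow> real"
  where "area p q t = integral {p..q} (\<lambda>x. \<delta> x t)"

lemma area_nonneg: "a \<le> p \<Longrightarrow> q \<le> b \<Longrightarrow> t \<in> time_int T \<Longrightarrow> 0 \<le> area p q t"
  unfolding area_def using delta_pos by (intro integral_nonneg delta_integrable) (auto intro: less_imp_le)

lemma area_pos:
  assumes "a \<le> p" "p < q" "q \<le> b" "t \<in> time_int T"
  shows "0 < area p q t"
proof -
  have "continuous_on {p..q} (\<lambda>x. \<delta> x t)"
    using assms by (intro continuous_on_slice_left[OF delta_cont]) auto
  moreover have "p \<le> q" using assms by simp
  ultimately obtain x where x: "x \<in> {p..q}" "(q - p) * \<delta> x t \<le> area p q t"
    unfolding area_def by (rule exists_point_below_average)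
  have "0 < (q - p) * \<delta> x t"
    using x(1) assms delta_pos[of x t] by simp
  with x(2) show ?thesis by linarith
qed

lemma area_mono:
  "a \<le> p \<Longrightarrow> p \<le> p' \<Longrightarrow> q' \<le> q \<Longrightarrow> q \<le> b \<Longrightarrow> t \<in> time_int T \<Longrightarrow> area p' q' t \<le> area p q t"
  unfolding area_def using delta_pos
  by (intro integral_subset_le delta_integrable) (auto intro: less_imp_le)

lemma area_ends_le:
  assumes "a \<le> p" "p \<le> p'" "p' \<le> q'" "q' \<le> q" "q \<le> b" "t \<in> time_int T"
  shows "area p p' t + area q' q t \<le> area p q t"
proof -
  have "area p p' t + area p' q t = area p q t"
    unfolding area_def using assms
    by (intro Henstock_Kurzweil_Integration.integral_combine delta_integrable) auto
  moreover have "area p' q' t + area q' q t = area p' q t"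
    unfolding area_def using assms
    by (intro Henstock_Kurzweil_Integration.integral_combine delta_integrable) auto
  moreover have "0 \<le> area p' q' t" using assms by (intro area_nonneg) auto
  ultimately show ?thesis by linarith
qed

lemma area_continuous:
  assumes "a \<le> p" "q \<le> b"
  shows "continuous_on (time_int T) (area p q)"
proof -
  have "continuous_on (time_int T \<times> cbox p q) (\<lambda>(t, x). \<delta> x t)"
    by (rule continuous_on_swap_args, rule continuous_on_subset[OF delta_cont]) (use assms in auto)
  from integral_continuous_on_param[OF this] show ?thesis
    by (simp add: area_def[abs_def])
qed

lemma U_times_delta_continuous: "continuous_on ({a..b} \<times> time_int T) (\<lambda>(x, s). U s * \<delta> x s)"
proof -
  have "continuous_on ({a..b} \<times> time_int T) (\<lambda>z. U (snd z))"
    by (rule continuous_on_compose2[OF U_cont]) (auto intro!: continuous_intros)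
  from continuous_on_mult[OF this delta_cont] show ?thesis by (simp add: split_beta)
qed

definition weighted_delta :: "real \<Rightarrow> real \<Rightarrow> real \<Rightarrow> real"
  where "weighted_delta t t1 x = integral {t..t1} (\<lambda>s. U s * \<delta> x s)"

lemma weighted_delta_continuous:
  assumes "t \<in> time_int T" "t1 \<in> time_int T"
  shows "continuous_on {a..b} (weighted_delta t t1)"
proof -
  have "continuous_on ({a..b} \<times> cbox t t1) (\<lambda>(x, s). U s * \<delta> x s)"
    using time_int_segment_subset[OF assms] by (intro continuous_on_subset[OF U_times_delta_continuous]) auto
  from integral_continuous_on_param[OF this] show ?thesis by (simp add: weighted_delta_def[abs_def])
qed

lemma integral_weighted_delta:
  assumes "a \<le> c" "d \<le> b" "t \<in> time_int T" "t1 \<in> time_int T"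
  shows "integral {c..d} (weighted_delta t t1) = integral {t..t1} (\<lambda>s. U s * area c d s)"
proof -
  have "continuous_on (cbox (c, t) (d, t1)) (\<lambda>(x, s). U s * \<delta> x s)"
    using assms time_int_segment_subset[of t T t1]
    by (intro continuous_on_subset[OF U_times_delta_continuous]) (auto simp: cbox_Pair_eq)
  from integral_swap_continuous[OF this] show ?thesis by (simp add: area_def weighted_delta_def[abs_def])
qed

lemma flux_integral_bound:
  assumes x: "x \<in> {a..b}" and t: "t \<in> time_int T" "t1 \<in> time_int T"
  shows "\<bar>integral {t..t1} (\<Phi> x)\<bar> \<le> weighted_delta t t1 x"
proof -
  have sub: "{t..t1} \<subseteq> time_int T" using time_int_segment_subset[OF t] .
  have "(\<lambda>s. U s * \<delta> x s) integrable_on {t..t1}"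
    by (intro integrable_continuous_interval continuous_on_slice_right[OF U_times_delta_continuous x sub])
  moreover have "\<Phi> x integrable_on {t..t1}"
    by (intro integrable_continuous_interval continuous_on_subset[OF flux_cont[OF x] sub])
  ultimately have "norm (integral {t..t1} (\<Phi> x)) \<le> integral {t..t1} (\<lambda>s. U s * \<delta> x s)"
    using sub flux_bound[OF x] by (intro integral_norm_bound_integral) auto
  then show ?thesis by (simp add: weighted_delta_def)
qed

lemma area_change:
  assumes ab': "a \<le> \<alpha>" "\<alpha> \<le> \<beta>" "\<beta> \<le> b" and t: "t \<in> time_int T" "t1 \<in> time_int T" "t \<le> t1"
  shows "area \<alpha> \<beta> t \<le> area \<alpha> \<beta> t1 + weighted_delta t t1 \<alpha> + weighted_delta t t1 \<beta>"
proof -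
  have \<Phi>_int: "\<Phi> x integrable_on {t..t1}" if "x \<in> {a..b}" for x
    using time_int_segment_subset[OF t(1,2)]
    by (intro integrable_continuous_interval continuous_on_subset[OF flux_cont[OF that]])
  have "area \<alpha> \<beta> t1 - area \<alpha> \<beta> t = integral {\<alpha>..\<beta>} (\<lambda>x. \<delta> x t1 - \<delta> x t)"
    unfolding area_def using ab' t by (intro integral_diff[symmetric] delta_integrable)
  also have "\<dots> = integral {t..t1} (\<Phi> \<beta>) - integral {t..t1} (\<Phi> \<alpha>)"
    unfolding balance[OF ab' t] using ab' by (intro integral_diff \<Phi>_int) auto
  finally show ?thesis
    using flux_integral_bound[of \<alpha> t t1] flux_integral_bound[of \<beta> t t1] ab' t by (simp add: abs_le_iff)
qed

lemma area_interior_le: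
  assumes "a \<le> \<alpha>" "\<alpha> \<le> p" "p \<le> q" "q \<le> \<beta>" "\<beta> \<le> b"
    and t: "t \<in> time_int T" "t1 \<in> time_int T" "t \<le> t1"
  shows "area p q t \<le> area a b t1 + weighted_delta t t1 \<alpha> + weighted_delta t t1 \<beta>"
proof -
  have "area p q t \<le> area \<alpha> \<beta> t"
    using assms by (intro area_mono) auto
  also have "\<dots> \<le> area \<alpha> \<beta> t1 + weighted_delta t t1 \<alpha> + weighted_delta t t1 \<beta>"
    using assms by (intro area_change) auto
  also have "area \<alpha> \<beta> t1 \<le> area a b t1"
    using assms by (intro area_mono) auto
  finally show ?thesis by simp
qed

lemma weighted_area_ends_le:
  assumes pq: "a \<le> p" "p \<le> p'" "p' \<le> q'" "q' \<le> q" "q \<le> b" and t: "t \<in> time_int T" "t1 \<in> time_int T"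
  shows "integral {p..p'} (weighted_delta t t1) + integral {q'..q} (weighted_delta t t1)
    \<le> integral {t..t1} (\<lambda>s. U s * area p q s)"
proof -
  have sub: "{t..t1} \<subseteq> time_int T" using time_int_segment_subset[OF t] .
  have int: "(\<lambda>s. U s * area c d s) integrable_on {t..t1}" if "a \<le> c" "d \<le> b" for c d
    by (intro integrable_continuous_interval continuous_on_mult continuous_on_subset[OF U_cont sub]
        continuous_on_subset[OF area_continuous[OF that] sub])
  have "integral {p..p'} (weighted_delta t t1) + integral {q'..q} (weighted_delta t t1)
      = integral {t..t1} (\<lambda>s. U s * area p p' s + U s * area q' q s)"
    using pq t by (simp add: integral_weighted_delta integral_add int)
  also have "\<dots> \<le> integral {t..t1} (\<lambda>s. U s * area p q s)"
  proof (rule integral_le)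
    fix s assume "s \<in> {t..t1}"
    then have s: "s \<in> time_int T" using sub by auto
    show "U s * area p p' s + U s * area q' q s \<le> U s * area p q s"
      using area_ends_le[OF pq s] U_nonneg[OF s] by (simp add: distrib_left[symmetric] mult_left_mono)
  qed (use pq in \<open>auto intro!: integrable_add int\<close>)
  finally show ?thesis .
qed

lemma area_step:
  assumes pq: "a \<le> p" "p + \<epsilon> \<le> q - \<epsilon>" "q \<le> b" and \<epsilon>: "0 < \<epsilon>"
    and t: "t \<in> time_int T" "t1 \<in> time_int T" "t \<le> t1"
  shows "\<epsilon> * area (p + \<epsilon>) (q - \<epsilon>) t \<le> \<epsilon> * area a b t1 + integral {t..t1} (\<lambda>s. U s * area p q s)"
proof -
  let ?w = "weighted_delta t t1"
  have cont: "continuous_on {p..p + \<epsilon>} ?w" "continuous_on {q - \<epsilon>..q} ?w"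
    using pq \<epsilon> by (intro continuous_on_subset[OF weighted_delta_continuous[OF t(1,2)]]; auto)+
  have "p \<le> p + \<epsilon>" "q - \<epsilon> \<le> q" using \<epsilon> by simp_all
  obtain \<alpha> where \<alpha>: "\<alpha> \<in> {p..p + \<epsilon>}" "(p + \<epsilon> - p) * ?w \<alpha> \<le> integral {p..p + \<epsilon>} ?w"
    by (rule exists_point_below_average[OF cont(1) \<open>p \<le> p + \<epsilon>\<close>])
  obtain \<beta> where \<beta>: "\<beta> \<in> {q - \<epsilon>..q}" "(q - (q - \<epsilon>)) * ?w \<beta> \<le> integral {q - \<epsilon>..q} ?w"
    by (rule exists_point_below_average[OF cont(2) \<open>q - \<epsilon> \<le> q\<close>])
  have "area (p + \<epsilon>) (q - \<epsilon>) t \<le> area a b t1 + ?w \<alpha> + ?w \<beta>"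
    using \<alpha>(1) \<beta>(1) pq t by (intro area_interior_le) auto
  from mult_left_mono[OF this less_imp_le[OF \<epsilon>]]
  have "\<epsilon> * area (p + \<epsilon>) (q - \<epsilon>) t
      \<le> \<epsilon> * area a b t1 + (integral {p..p + \<epsilon>} ?w + integral {q - \<epsilon>..q} ?w)"
    using \<alpha>(2) \<beta>(2) unfolding distrib_left by simp
  also have "\<dots> \<le> \<epsilon> * area a b t1 + integral {t..t1} (\<lambda>s. U s * area p q s)"
    using pq \<epsilon> t by (intro add_left_mono weighted_area_ends_le) auto
  finally show ?thesis .
qed

lemma area_iterated_bound:
  assumes bound: "\<And>x t. x \<in> {a..b} \<Longrightarrow> t \<in> time_int T \<Longrightarrow> \<delta> x t \<le> M"
    and t: "t0 \<in> time_int T" "t1 \<in> time_int T" "t0 \<le> t1" and \<eta>: "integral {t0..t1} U \<le> \<eta>"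
    and \<epsilon>: "0 < \<epsilon>" and k: "2 * real k * \<epsilon> \<le> b - a"
  shows "area (a + k * \<epsilon>) (b - k * \<epsilon>) t0
    \<le> area a b t1 * (\<Sum>j<k. (\<eta> / \<epsilon>) ^ j) + M * (b - a) * (integral {t0..t1} U / \<epsilon>) ^ k / fact k"
proof -
  have sub: "{t0..t1} \<subseteq> time_int T" using time_int_segment_subset[OF t(1,2)] .
  have room: "2 * real (Suc m) * \<epsilon> \<le> b - a" if "m < k" for m
  proof -
    have "2 * real (Suc m) * \<epsilon> \<le> 2 * real k * \<epsilon>" using that \<epsilon> by (intro mult_right_mono) auto
    with k show ?thesis by linarith
  qed
  show ?thesis
  proof (rule iterated_integral_inequality[where F = "\<lambda>m. area (a + m * \<epsilon>) (b - m * \<epsilon>)"])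
    show "continuous_on {t0..t1} U" using continuous_on_subset[OF U_cont sub] .
    show "0 \<le> U s" if "s \<in> {t0..t1}" for s using that sub U_nonneg by auto
    show "continuous_on {t0..t1} (area (a + m * \<epsilon>) (b - m * \<epsilon>))" if "m < k" for m
      using \<epsilon> by (intro continuous_on_subset[OF area_continuous sub]) auto
    show "area (a + real 0 * \<epsilon>) (b - real 0 * \<epsilon>) t \<le> M * (b - a)" if "t \<in> {t0..t1}" for t
    proof -
      have "integral {a..b} (\<lambda>x. \<delta> x t) \<le> integral {a..b} (\<lambda>_. M)"
        using that sub bound ab by (intro integral_le delta_integrable) auto
      then show ?thesis using ab by (simp add: area_def mult.commute)
    qed
    show "\<epsilon> * area (a + real (Suc m) * \<epsilon>) (b - real (Suc m) * \<epsilon>) t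
      \<le> \<epsilon> * area a b t1 + integral {t..t1} (\<lambda>s. U s * area (a + m * \<epsilon>) (b - m * \<epsilon>) s)"
      if "m < k" "t \<in> {t0..t1}" for m t
      using area_step[of "a + m * \<epsilon>" \<epsilon> "b - m * \<epsilon>" t t1] room[OF that(1)] \<epsilon> that(2) sub t
      by (auto simp: algebra_simps)
    show "0 \<le> area a b t1" using t by (intro area_nonneg) auto
  qed (use t \<eta> \<epsilon> in auto)
qed

lemma area_eventually_small:
  assumes bound: "\<And>x t. x \<in> {a..b} \<Longrightarrow> t \<in> time_int T \<Longrightarrow> \<bar>\<delta> x t\<bar> \<le> M"
    and vanish: "\<And>x. x \<in> {a..b} \<Longrightarrow> ((\<lambda>t. \<delta> x t) \<longlongrightarrow> 0) (before T)"
    and t0: "t0 \<in> time_int T" and "0 < \<zeta>"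
  shows "\<exists>t1\<in>time_int T. t0 \<le> t1 \<and> area a b t1 < \<zeta>"
proof -
  obtain \<sigma> where \<sigma>: "\<And>n. \<sigma> n \<in> time_int T" "\<And>n. t0 \<le> \<sigma> n"
    and \<sigma>_lim: "filterlim \<sigma> (before T) sequentially"
    using before_sequence[OF t0] by blast
  have "(\<lambda>n. integral {a..b} (\<lambda>x. \<delta> x (\<sigma> n))) \<longlonglongrightarrow> integral {a..b} (\<lambda>x. 0)"
  proof (rule dominated_convergence(2))
    show "(\<lambda>x. \<delta> x (\<sigma> n)) integrable_on {a..b}" for n by (intro delta_integrable \<sigma>) auto
    show "(\<lambda>x. M) integrable_on {a..b}" by (rule Henstock_Kurzweil_Integration.integrable_const_ivl)
    show "norm (\<delta> x (\<sigma> n)) \<le> M" if "x \<in> {a..b}" for n x using bound[OF that \<sigma>(1)] by simp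
    show "(\<lambda>n. \<delta> x (\<sigma> n)) \<longlonglongrightarrow> 0" if "x \<in> {a..b}" for x
      using filterlim_compose[OF vanish[OF that] \<sigma>_lim] by simp
  qed
  then have "(\<lambda>n. area a b (\<sigma> n)) \<longlonglongrightarrow> 0" by (simp add: area_def)
  then have "\<forall>\<^sub>F n in sequentially. area a b (\<sigma> n) < \<zeta>"
    using \<open>0 < \<zeta>\<close> by (rule order_tendstoD(2))
  then obtain n where "area a b (\<sigma> n) < \<zeta>"
    by (auto simp: eventually_sequentially)
  with \<sigma> show ?thesis by blast
qed

lemma area_interior_bound:
  assumes bound: "\<And>x t. x \<in> {a..b} \<Longrightarrow> t \<in> time_int T \<Longrightarrow> \<delta> x t \<le> M"
    and t: "t0 \<in> time_int T" "t1 \<in> time_int T" "t0 \<le> t1"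
    and tail: "integral {t0..t1} U \<le> (b - a) / 24" and k: "0 < k"
  shows "area (a + (b - a) / 4) (b - (b - a) / 4) t0
    \<le> area a b t1 * (\<Sum>j<k. (real k / 6) ^ j) + M * (b - a) * (1 / 2) ^ k"
proof -
  define \<epsilon> where "\<epsilon> = (b - a) / 4 / k"
  define V where "V = integral {t0..t1} U"
  have \<epsilon>: "0 < \<epsilon>" and k\<epsilon>: "real k * \<epsilon> = (b - a) / 4" and \<eta>\<epsilon>: "(b - a) / 24 / \<epsilon> = real k / 6"
    using ab k by (simp_all add: \<epsilon>_def field_simps)
  have M: "0 \<le> M"
    using bound[of a t0] delta_pos[of a t0] ab t by fastforce
  have "0 \<le> V"
    unfolding V_def using U_nonneg time_int_segment_subset[OF t(1,2)]
    by (intro integral_nonneg U_integrable time_int_nonneg[OF t(1)] t(2)) auto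
  moreover have "V / \<epsilon> \<le> (b - a) / 24 / \<epsilon>"
    using divide_right_mono[OF tail less_imp_le[OF \<epsilon>]] unfolding V_def .
  ultimately have V: "0 \<le> V / \<epsilon>" "V / \<epsilon> \<le> real k / 6"
    using \<epsilon> unfolding \<eta>\<epsilon> by simp_all
  have "area (a + k * \<epsilon>) (b - k * \<epsilon>) t0
      \<le> area a b t1 * (\<Sum>j<k. ((b - a) / 24 / \<epsilon>) ^ j) + M * (b - a) * (V / \<epsilon>) ^ k / fact k"
    unfolding V_def
  proof (rule area_iterated_bound[OF bound t tail \<epsilon>])
    have "2 * real k * \<epsilon> = 2 * ((b - a) / 4)" by (simp only: mult.assoc k\<epsilon>)
    then show "2 * real k * \<epsilon> \<le> b - a" using ab by simp
  qed
  also have "M * (b - a) * (V / \<epsilon>) ^ k / fact k \<le> M * (b - a) * (1 / 2) ^ k"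
    using power_div_fact_le_half_power[OF V] M ab
    by (simp add: mult_left_mono times_divide_eq_right[symmetric] del: times_divide_eq_right)
  finally show ?thesis unfolding k\<epsilon> \<eta>\<epsilon> by simp
qed

theorem no_collapse:
  assumes bound: "\<And>x t. x \<in> {a..b} \<Longrightarrow> t \<in> time_int T \<Longrightarrow> \<bar>\<delta> x t\<bar> \<le> M"
    and vanish: "\<And>x. x \<in> {a..b} \<Longrightarrow> ((\<lambda>t. \<delta> x t) \<longlongrightarrow> 0) (before T)"
  shows "False"
proof -
  obtain t0 where t0: "t0 \<in> time_int T"
    and tail: "\<And>t1. t1 \<in> time_int T \<Longrightarrow> t0 \<le> t1 \<Longrightarrow> integral {t0..t1} U \<le> (b - a) / 24"
    using U_tail_small[of "(b - a) / 24"] ab by auto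
  define P where "P = area (a + (b - a) / 4) (b - (b - a) / 4) t0"
  have "a + (b - a) / 4 < b - (b - a) / 4" using ab by (simp add: field_simps)
  then have P: "0 < P"
    unfolding P_def using ab t0 by (intro area_pos) auto
  define A where "A = M * (b - a)"
  have A: "0 \<le> A"
    using bound[of a t0] ab t0 by (auto simp: A_def intro!: mult_nonneg_nonneg)
  obtain k :: nat where k: "0 < k" "A * (1 / 2) ^ k < P / 2"
  proof -
    obtain n where n: "(1 / 2) ^ n < P / (2 * (A + 1))"
      using real_arch_pow_inv[of "P / (2 * (A + 1))" "1 / 2"] P A by auto
    have "A * (1 / 2) ^ Suc n \<le> (A + 1) * (1 / 2) ^ n"
      using A by (intro mult_mono power_decreasing) auto
    also have "\<dots> < (A + 1) * (P / (2 * (A + 1)))"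
      using n A by (intro mult_strict_left_mono) auto
    also have "\<dots> = P / 2"
      using A by (simp add: field_simps)
    finally show ?thesis by (intro that[of "Suc n"]) simp_all
  qed
  define \<Sigma> where "\<Sigma> = (\<Sum>j<k. (real k / 6) ^ j)"
  have \<Sigma>: "0 \<le> \<Sigma>" unfolding \<Sigma>_def by (intro sum_nonneg) simp
  obtain t1 where t1: "t1 \<in> time_int T" "t0 \<le> t1" and E: "area a b t1 < P / (2 * (\<Sigma> + 1))"
    using area_eventually_small[OF bound vanish t0, of "P / (2 * (\<Sigma> + 1))"] P \<Sigma> by auto
  have "area a b t1 * \<Sigma> \<le> P / (2 * (\<Sigma> + 1)) * \<Sigma>"
    using E \<Sigma> by (intro mult_right_mono) auto
  also have "\<dots> < P / 2"
    using P \<Sigma> by (simp add: field_simps)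
  finally have "area a b t1 * \<Sigma> < P / 2" .
  moreover have "\<delta> x t \<le> M" if "x \<in> {a..b}" "t \<in> time_int T" for x t
    using bound[OF that] by (rule abs_le_D1)
  then have "P \<le> area a b t1 * \<Sigma> + A * (1 / 2) ^ k"
    unfolding P_def \<Sigma>_def A_def using t0 t1 tail[OF t1] k(1) by (rule area_interior_bound)
  ultimately show False using k(2) by linarith
qed

end

lemma Ck_on_subset: "Ck_on k U g \<Longrightarrow> V \<subseteq> U \<Longrightarrow> Ck_on k V g"
  by (induction k arbitrary: g) (auto intro: continuous_on_subset)

locale moving_strip =
  fixes T :: ereal and \<psi> :: "real \<times> real \<times> real \<Rightarrow> real" and a b :: real
    and fp fm fpx fpt fmx fmt :: "real \<Rightarrow> real \<Rightarrow> real"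
  assumes T_pos: "0 < T"
    and psi_C1: "Ck_on 1 {(x1, x2, t). t \<in> time_int T} \<psi>"
    and ab: "a < b"
    and fp_dx: "\<And>x t. x \<in> {a..b} \<Longrightarrow> t \<in> time_int T \<Longrightarrow>
                  ((\<lambda>y. fp y t) has_real_derivative fpx x t) (at x within {a..b})"
    and fp_dt: "\<And>x t. x \<in> {a..b} \<Longrightarrow> t \<in> time_int T \<Longrightarrow>
                  ((\<lambda>s. fp x s) has_real_derivative fpt x t) (at t within time_int T)"
    and fm_dx: "\<And>x t. x \<in> {a..b} \<Longrightarrow> t \<in> time_int T \<Longrightarrow>
                  ((\<lambda>y. fm y t) has_real_derivative fmx x t) (at x within {a..b})"
    and fm_dt: "\<And>x t. x \<in> {a..b} \<Longrightarrow> t \<in> time_int T \<Longrightarrow>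
                  ((\<lambda>s. fm x s) has_real_derivative fmt x t) (at t within time_int T)"
    and fp_cont: "continuous_on ({a..b} \<times> time_int T) (\<lambda>(x, t). fp x t)"
    and fpt_cont: "continuous_on ({a..b} \<times> time_int T) (\<lambda>(x, t). fpt x t)"
    and fm_cont: "continuous_on ({a..b} \<times> time_int T) (\<lambda>(x, t). fm x t)"
    and fmt_cont: "continuous_on ({a..b} \<times> time_int T) (\<lambda>(x, t). fmt x t)"
    and order: "\<And>x t. x \<in> {a..b} \<Longrightarrow> t \<in> time_int T \<Longrightarrow> fm x t < fp x t"
    and kin_p: "\<And>x t. x \<in> {a..b} \<Longrightarrow> t \<in> time_int T \<Longrightarrow>
                  vel2 \<psi> x (fp x t) t = fpx x t * vel1 \<psi> x (fp x t) t + fpt x t"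
    and kin_m: "\<And>x t. x \<in> {a..b} \<Longrightarrow> t \<in> time_int T \<Longrightarrow>
                  vel2 \<psi> x (fm x t) t = fmx x t * vel1 \<psi> x (fm x t) t + fmt x t"
    and growth: "(\<integral>\<^sup>+ t \<in> time_int T.
                    (SUP p \<in> {(x1, x2). x1 \<in> {a..b} \<and> fm x1 t \<le> x2 \<and> x2 \<le> fp x1 t}.
                       ennreal (sqrt ((vel1 \<psi> (fst p) (snd p) t)\<^sup>2 + (vel2 \<psi> (fst p) (snd p) t)\<^sup>2)))
                  \<partial>lborel) < \<infinity>"
begin

definition dpsi :: "real \<times> real \<times> real \<Rightarrow> real \<times> real \<times> real \<Rightarrow> real"
  where "dpsi p = frechet_derivative \<psi> (at p)"

lemma psi_has_derivative: "s \<in> time_int T \<Longrightarrow> (\<psi> has_derivative dpsi (x, y, s)) (at (x, y, s))"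
  using psi_C1 unfolding dpsi_def by (auto simp: frechet_derivative_works)

lemma dpsi_continuous:
  "e \<in> Basis \<Longrightarrow> continuous_on {(x1, x2, t). t \<in> time_int T} (\<lambda>p. dpsi p e)"
  using psi_C1 unfolding dpsi_def by simp

lemma psi_continuous: "continuous_on {(x1, x2, t). t \<in> time_int T} \<psi>"
  using psi_has_derivative has_derivative_continuous
  by (blast intro: continuous_at_imp_continuous_on)

lemma psi_along_curve:
  assumes s: "s \<in> time_int T" and \<gamma>: "(\<gamma> has_vector_derivative v) (at r within X)"
    and \<gamma>r: "\<gamma> r = (x, y, s)"
  shows "((\<lambda>r. \<psi> (\<gamma> r)) has_real_derivative dpsi (x, y, s) v) (at r within X)"
proof -
  have "(\<psi> has_derivative dpsi (x, y, s)) (at (\<gamma> r) within \<gamma> ` X)"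
    unfolding \<gamma>r by (rule has_derivative_at_withinI[OF psi_has_derivative[OF s]])
  from vector_derivative_diff_chain_within[OF \<gamma> this] show ?thesis
    by (simp add: has_real_derivative_iff_has_vector_derivative o_def)
qed

lemma psi_partial_y:
  assumes "s \<in> time_int T"
  shows "((\<lambda>y. \<psi> (x, y, s)) has_real_derivative dpsi (x, y, s) (0, 1, 0)) (at y)"
  by (intro psi_along_curve[OF assms, where \<gamma> = "\<lambda>y. (x, y, s)"] refl has_vector_derivative_Pair
      has_vector_derivative_const has_vector_derivative_id)

lemma psi_partial_x:
  assumes "s \<in> time_int T"
  shows "((\<lambda>x. \<psi> (x, y, s)) has_real_derivative dpsi (x, y, s) (1, 0, 0)) (at x)"
  by (intro psi_along_curve[OF assms, where \<gamma> = "\<lambda>x. (x, y, s)"] refl has_vector_derivative_Pair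
      has_vector_derivative_const has_vector_derivative_id)

lemma vel1_eq: "s \<in> time_int T \<Longrightarrow> vel1 \<psi> x y s = - dpsi (x, y, s) (0, 1, 0)"
  unfolding vel1_def by (simp add: DERIV_imp_deriv[OF psi_partial_y])

lemma vel2_eq: "s \<in> time_int T \<Longrightarrow> vel2 \<psi> x y s = dpsi (x, y, s) (1, 0, 0)"
  unfolding vel2_def by (simp add: DERIV_imp_deriv[OF psi_partial_x])

lemma psi_vertical_derivative:
  "s \<in> time_int T \<Longrightarrow> ((\<lambda>y. \<psi> (x, y, s)) has_real_derivative - vel1 \<psi> x y s) (at y)"
  using psi_partial_y vel1_eq by simp

lemma psi_along_graph:
  assumes s: "s \<in> time_int T" and f: "(f has_real_derivative f') (at x within X)"
  shows "((\<lambda>x. \<psi> (x, f x, s)) has_real_derivative vel2 \<psi> x (f x) s - f' * vel1 \<psi> x (f x) s)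
    (at x within X)"
proof -
  have "((\<lambda>x. \<psi> (x, f x, s)) has_real_derivative dpsi (x, f x, s) (1, f', 0)) (at x within X)"
    using f by (intro psi_along_curve[OF s]) (auto intro!: derivative_eq_intros
        simp: has_real_derivative_iff_has_vector_derivative[symmetric])
  moreover have "dpsi (x, f x, s) (1, f', 0) = vel2 \<psi> x (f x) s - f' * vel1 \<psi> x (f x) s"
  proof -
    have L: "linear (dpsi (x, f x, s))"
      using has_derivative_linear[OF psi_has_derivative[OF s]] .
    have "dpsi (x, f x, s) (1, f', 0) = dpsi (x, f x, s) ((1, 0, 0) + f' *\<^sub>R (0, 1, 0))"
      by simp
    also have "\<dots> = dpsi (x, f x, s) (1, 0, 0) + f' * dpsi (x, f x, s) (0, 1, 0)"
      by (simp only: linear_add[OF L] linear_scale[OF L]) simp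
    finally show ?thesis
      using vel1_eq[OF s] vel2_eq[OF s] by simp
  qed
  ultimately show ?thesis by simp
qed

definition flux :: "real \<Rightarrow> real \<Rightarrow> real"
  where "flux x s = \<psi> (x, fp x s, s) - \<psi> (x, fm x s, s)"

lemma flux_derivative:
  assumes "x \<in> {a..b}" "s \<in> time_int T"
  shows "((\<lambda>x. flux x s) has_real_derivative fpt x s - fmt x s) (at x within {a..b})"
proof -
  have "((\<lambda>x. \<psi> (x, fp x s, s)) has_real_derivative fpt x s) (at x within {a..b})"
    using psi_along_graph[OF assms(2) fp_dx[OF assms]] kin_p[OF assms] by simp
  moreover have "((\<lambda>x. \<psi> (x, fm x s, s)) has_real_derivative fmt x s) (at x within {a..b})"
    using psi_along_graph[OF assms(2) fm_dx[OF assms]] kin_m[OF assms] by simp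
  ultimately show ?thesis unfolding flux_def by (rule DERIV_diff)
qed

lemma flux_continuous:
  assumes x: "x \<in> {a..b}"
  shows "continuous_on (time_int T) (flux x)"
proof -
  have "continuous_on (time_int T) (\<lambda>s. \<psi> (x, f x s, s))"
    if "continuous_on ({a..b} \<times> time_int T) (\<lambda>(x, t). f x t)" for f
    by (rule continuous_on_compose2[OF psi_continuous])
      (auto intro!: continuous_intros continuous_on_slice_right[OF that x])
  from continuous_on_diff[OF this[OF fp_cont] this[OF fm_cont]] show ?thesis
    by (simp add: flux_def[abs_def])
qed

lemma flux_balance:
  assumes "a \<le> \<alpha>" "\<alpha> \<le> \<beta>" "\<beta> \<le> b" and t: "t \<in> time_int T" "t1 \<in> time_int T" "t \<le> t1"
  shows "integral {\<alpha>..\<beta>} (\<lambda>x. (fp x t1 - fm x t1) - (fp x t - fm x t))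
    = integral {t..t1} (\<lambda>s. flux \<beta> s - flux \<alpha> s)"
proof (rule integral_conservation_rectangle[OF assms(2) t(3)])
  have sub: "{\<alpha>..\<beta>} \<subseteq> {a..b}" "{t..t1} \<subseteq> time_int T"
    using assms atLeastAtMost_subset_time_int[OF time_int_nonneg[OF t(1)] t(2)] by auto
  have "continuous_on ({a..b} \<times> time_int T) (\<lambda>(x, s). fpt x s - fmt x s)"
    using continuous_on_diff[OF fpt_cont fmt_cont] by (simp add: split_beta)
  then show "continuous_on ({\<alpha>..\<beta>} \<times> {t..t1}) (\<lambda>(x, s). fpt x s - fmt x s)"
    by (rule continuous_on_subset) (use sub in blast)
  fix x s assume x: "x \<in> {\<alpha>..\<beta>}" and s: "s \<in> {t..t1}"
  then have x': "x \<in> {a..b}" and s': "s \<in> time_int T" using sub by blast+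
  show "((\<lambda>s. fp x s - fm x s) has_real_derivative fpt x s - fmt x s) (at s within {t..t1})"
    by (intro DERIV_diff DERIV_subset[OF fp_dt[OF x' s'] sub(2)] DERIV_subset[OF fm_dt[OF x' s'] sub(2)])
  show "((\<lambda>x. flux x s) has_real_derivative fpt x s - fmt x s) (at x within {\<alpha>..\<beta>})"
    by (rule DERIV_subset[OF flux_derivative[OF x' s'] sub(1)])
qed

definition speed :: "real \<Rightarrow> real \<Rightarrow> real \<Rightarrow> real"
  where "speed x y s = sqrt ((vel1 \<psi> x y s)\<^sup>2 + (vel2 \<psi> x y s)\<^sup>2)"

lemma speed_continuous:
  "continuous_on {(x1, x2, t). t \<in> time_int T} (\<lambda>(x, y, s). speed x y s)"
proof -
  have "(1, 0, 0) \<in> (Basis :: (real \<times> real \<times> real) set)" "(0, 1, 0) \<in> (Basis :: (real \<times> real \<times> real) set)"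
    by (simp_all add: Basis_prod_def zero_prod_def)
  then have "continuous_on {(x1, x2, t). t \<in> time_int T}
      (\<lambda>p. sqrt ((- dpsi p (0, 1, 0))\<^sup>2 + (dpsi p (1, 0, 0))\<^sup>2))"
    by (intro continuous_intros dpsi_continuous)
  then show ?thesis
    by (rule continuous_on_eq) (auto simp: speed_def vel1_eq vel2_eq)
qed

(* The region between the arcs at time s, parametrised by [a,b] x [0,1] so that the parameter set
   does not move with s. *)
definition strip_speed :: "real \<times> real \<Rightarrow> real \<Rightarrow> real"
  where "strip_speed q s = speed (fst q) (fm (fst q) s + snd q * (fp (fst q) s - fm (fst q) s)) s"

definition max_speed :: "real \<Rightarrow> real"
  where "max_speed s = (SUP q\<in>{a..b} \<times> {0..1}. strip_speed q s)"

lemma strip_speed_continuous: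
  "continuous_on (({a..b} \<times> {0..1}) \<times> time_int T) (\<lambda>(q, s). strip_speed q s)"
proof -
  let ?D = "({a..b} \<times> {0..1::real}) \<times> time_int T"
  have lift: "continuous_on ?D (\<lambda>z. f (fst (fst z)) (snd z))"
    if "continuous_on ({a..b} \<times> time_int T) (\<lambda>(x, t). f x t)" for f
  proof -
    have "continuous_on ?D (\<lambda>z. (\<lambda>(x, t). f x t) (fst (fst z), snd z))"
      by (rule continuous_on_compose2[OF that]) (auto intro!: continuous_intros)
    then show ?thesis by simp
  qed
  have "continuous_on ?D (\<lambda>z. (fst (fst z),
      fm (fst (fst z)) (snd z) + snd (fst z) * (fp (fst (fst z)) (snd z) - fm (fst (fst z)) (snd z)), snd z))"
    by (intro continuous_intros lift[OF fp_cont] lift[OF fm_cont])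
  then have "continuous_on ?D (\<lambda>z. (\<lambda>(x, y, s). speed x y s) (fst (fst z),
      fm (fst (fst z)) (snd z) + snd (fst z) * (fp (fst (fst z)) (snd z) - fm (fst (fst z)) (snd z)), snd z))"
    by (rule continuous_on_compose2[OF speed_continuous]) auto
  then show ?thesis by (simp add: strip_speed_def split_beta)
qed

lemma max_speed_attained:
  assumes s: "s \<in> time_int T"
  obtains q where "q \<in> {a..b} \<times> {0..1}" "max_speed s = strip_speed q s"
    "\<And>q'. q' \<in> {a..b} \<times> {0..1} \<Longrightarrow> strip_speed q' s \<le> strip_speed q s"
proof -
  have "compact ({a..b} \<times> {0..1::real})" "{a..b} \<times> {0..1::real} \<noteq> {}"
    using ab by (auto intro: compact_Times)
  moreover have "continuous_on ({a..b} \<times> {0..1}) (\<lambda>q. strip_speed q s)"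
    using s by (intro continuous_on_slice_left[OF strip_speed_continuous]) auto
  ultimately obtain q where q: "q \<in> {a..b} \<times> {0..1}"
    and max: "\<And>q'. q' \<in> {a..b} \<times> {0..1} \<Longrightarrow> strip_speed q' s \<le> strip_speed q s"
    using continuous_attains_sup by metis
  moreover have "max_speed s = strip_speed q s"
    unfolding max_speed_def using q max
    by (intro antisym cSUP_least cSUP_upper bdd_aboveI2[where M = "strip_speed q s"]) auto
  ultimately show ?thesis using that by blast
qed

lemma speed_le_max_speed:
  assumes x: "x \<in> {a..b}" and s: "s \<in> time_int T" and y: "fm x s \<le> y" "y \<le> fp x s"
  shows "speed x y s \<le> max_speed s"
proof -
  define \<theta> where "\<theta> = (y - fm x s) / (fp x s - fm x s)"
  have pos: "0 < fp x s - fm x s" using order[OF x s] by simp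
  have "(x, \<theta>) \<in> {a..b} \<times> {0..1}" using x y pos by (auto simp: \<theta>_def field_simps)
  moreover have "strip_speed (x, \<theta>) s = speed x y s"
    using pos by (simp add: strip_speed_def \<theta>_def)
  ultimately show ?thesis
    using max_speed_attained[OF s] by metis
qed

lemma max_speed_continuous: "continuous_on (time_int T) max_speed"
proof (rule continuous_on_time_int)
  fix t assume t: "t \<in> time_int T"
  show "continuous_on {0..t} max_speed"
    unfolding max_speed_def using ab atLeastAtMost_subset_time_int[OF order_refl t]
    by (intro continuous_on_SUP_compact continuous_on_subset[OF strip_speed_continuous] compact_Times)
      auto
qed

lemma max_speed_nn_integral: "(\<integral>\<^sup>+ t \<in> time_int T. ennreal (max_speed t) \<partial>lborel) < \<infinity>"
proof (rule le_less_trans[OF nn_integral_mono growth])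
  fix t
  show "ennreal (max_speed t) * indicator (time_int T) t
    \<le> (SUP p \<in> {(x1, x2). x1 \<in> {a..b} \<and> fm x1 t \<le> x2 \<and> x2 \<le> fp x1 t}.
          ennreal (sqrt ((vel1 \<psi> (fst p) (snd p) t)\<^sup>2 + (vel2 \<psi> (fst p) (snd p) t)\<^sup>2)))
      * indicator (time_int T) t"
  proof (cases "t \<in> time_int T")
    case True
    obtain q where q: "q \<in> {a..b} \<times> {0..1}" "max_speed t = strip_speed q t"
      using max_speed_attained[OF True] by blast
    define y where "y = fm (fst q) t + snd q * (fp (fst q) t - fm (fst q) t)"
    have q1: "fst q \<in> {a..b}" "0 \<le> snd q" "snd q \<le> 1" using q(1) by auto
    have "0 < fp (fst q) t - fm (fst q) t" using order[OF q1(1) True] by simp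
    then have "0 \<le> snd q * (fp (fst q) t - fm (fst q) t)"
      "snd q * (fp (fst q) t - fm (fst q) t) \<le> fp (fst q) t - fm (fst q) t"
      using q1 by (simp_all add: mult_left_le_one_le)
    then have "fm (fst q) t \<le> y \<and> y \<le> fp (fst q) t"
      unfolding y_def by linarith
    then have "(fst q, y) \<in> {(x1, x2). x1 \<in> {a..b} \<and> fm x1 t \<le> x2 \<and> x2 \<le> fp x1 t}"
      using q(1) by auto
    from SUP_upper[OF this, of "\<lambda>p. ennreal (sqrt ((vel1 \<psi> (fst p) (snd p) t)\<^sup>2 + (vel2 \<psi> (fst p) (snd p) t)\<^sup>2))"]
    show ?thesis using True q(2) by (simp add: strip_speed_def speed_def y_def)
  qed simp
qed

lemma flux_bound:
  assumes x: "x \<in> {a..b}" and s: "s \<in> time_int T"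
  shows "\<bar>flux x s\<bar> \<le> max_speed s * (fp x s - fm x s)"
proof -
  obtain z where z: "fm x s < z" "z < fp x s"
    and mvt: "flux x s = (fp x s - fm x s) * - vel1 \<psi> x z s"
    using MVT2[OF order[OF x s] psi_vertical_derivative[OF s]] unfolding flux_def by blast
  have "\<bar>vel1 \<psi> x z s\<bar> \<le> speed x z s"
    unfolding speed_def by (rule real_le_rsqrt) simp
  also have "\<dots> \<le> max_speed s"
    using z by (intro speed_le_max_speed x s) auto
  finally show ?thesis
    using z by (simp add: mvt abs_mult mult.commute mult_left_mono)
qed

sublocale flux_controlled_layer T a b "\<lambda>x t. fp x t - fm x t" flux max_speed
proof
  show "continuous_on ({a..b} \<times> time_int T) (\<lambda>(x, t). fp x t - fm x t)"
    using continuous_on_diff[OF fp_cont fm_cont] by (simp add: split_beta)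
qed (use T_pos ab order flux_continuous flux_bound flux_balance max_speed_continuous
    max_speed_nn_integral in auto)

end

theorem theorem1:
  fixes T :: ereal and \<psi> :: "real \<times> real \<times> real \<Rightarrow> real" and a b :: real
    and fp fm fpx fpt fmx fmt :: "real \<Rightarrow> real \<Rightarrow> real"
  assumes T_pos: "0 < T"
    and smooth: "smooth_on {(x1, x2, t). t \<in> time_int T} \<psi>"
    and ab: "a < b"
    and fp_dx: "\<And>x t. x \<in> {a..b} \<Longrightarrow> t \<in> time_int T \<Longrightarrow>
                  ((\<lambda>y. fp y t) has_real_derivative fpx x t) (at x within {a..b})"
    and fp_dt: "\<And>x t. x \<in> {a..b} \<Longrightarrow> t \<in> time_int T \<Longrightarrow>
                  ((\<lambda>s. fp x s) has_real_derivative fpt x t) (at t within time_int T)"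
    and fm_dx: "\<And>x t. x \<in> {a..b} \<Longrightarrow> t \<in> time_int T \<Longrightarrow>
                  ((\<lambda>y. fm y t) has_real_derivative fmx x t) (at x within {a..b})"
    and fm_dt: "\<And>x t. x \<in> {a..b} \<Longrightarrow> t \<in> time_int T \<Longrightarrow>
                  ((\<lambda>s. fm x s) has_real_derivative fmt x t) (at t within time_int T)"
    and cont: "continuous_on ({a..b} \<times> time_int T) (\<lambda>(x, t). fp x t)"
              "continuous_on ({a..b} \<times> time_int T) (\<lambda>(x, t). fpx x t)"
              "continuous_on ({a..b} \<times> time_int T) (\<lambda>(x, t). fpt x t)"
              "continuous_on ({a..b} \<times> time_int T) (\<lambda>(x, t). fm x t)"
              "continuous_on ({a..b} \<times> time_int T) (\<lambda>(x, t). fmx x t)"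
              "continuous_on ({a..b} \<times> time_int T) (\<lambda>(x, t). fmt x t)"
    and order: "\<And>x t. x \<in> {a..b} \<Longrightarrow> t \<in> time_int T \<Longrightarrow> fm x t < fp x t"
    and kin_p: "\<And>x t. x \<in> {a..b} \<Longrightarrow> t \<in> time_int T \<Longrightarrow>
                  vel2 \<psi> x (fp x t) t = fpx x t * vel1 \<psi> x (fp x t) t + fpt x t"
    and kin_m: "\<And>x t. x \<in> {a..b} \<Longrightarrow> t \<in> time_int T \<Longrightarrow>
                  vel2 \<psi> x (fm x t) t = fmx x t * vel1 \<psi> x (fm x t) t + fmt x t"
    and growth: "(\<integral>\<^sup>+ t \<in> time_int T.
                    (SUP p \<in> {(x1, x2). x1 \<in> {a..b} \<and> fm x1 t \<le> x2 \<and> x2 \<le> fp x1 t}.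
                       ennreal (sqrt ((vel1 \<psi> (fst p) (snd p) t)\<^sup>2 + (vel2 \<psi> (fst p) (snd p) t)\<^sup>2)))
                  \<partial>lborel) < \<infinity>"
  shows "\<not> ((\<exists>M. \<forall>x\<in>{a..b}. \<forall>t\<in>time_int T. \<bar>fp x t - fm x t\<bar> \<le> M) \<and>
            (\<forall>x\<in>{a..b}. ((\<lambda>t. fp x t - fm x t) \<longlongrightarrow> 0) (before T)))"
proof (intro notI, elim conjE exE)
  fix M
  assume bound: "\<forall>x\<in>{a..b}. \<forall>t\<in>time_int T. \<bar>fp x t - fm x t\<bar> \<le> M"
    and vanish: "\<forall>x\<in>{a..b}. ((\<lambda>t. fp x t - fm x t) \<longlongrightarrow> 0) (before T)"
  obtain W where "Ck_on 1 W \<psi>" "{(x1, x2, t). t \<in> time_int T} \<subseteq> W"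
    using smooth unfolding smooth_on_def by blast
  then have "Ck_on 1 {(x1, x2, t). t \<in> time_int T} \<psi>"
    by (rule Ck_on_subset)
  then interpret moving_strip T \<psi> a b fp fm fpx fpt fmx fmt
    using T_pos ab fp_dx fp_dt fm_dx fm_dt cont(1,3,4,6) order kin_p kin_m growth
    by unfold_locales
  show False
    using bound vanish by (intro no_collapse) auto
qed

end
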